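(* Let $A\in\mathbb{R}^{m\times n}$, let $d\ge n$, and let $\{u_\ell\}_{\ell\in[L]}$ be a projective $2$-design for $\mathbb{R}^d$. Let $\Pi:\mathbb{R}^d\to\mathbb{R}^n$ be the projection onto the first $n$ coordinates, and let $z$ be a random vector uniformly distributed over the list $\{\sqrt d\,\Pi u_\ell:\ell\in[L]\}$ (i.e. $z=\sqrt d\,\Pi u_\ell$ with $\ell$ uniform on $[L]$). Let $x\in\mathbb{R}^n$ be a unit vector and define the random vector $y:=Azz^\top x\in\mathbb{R}^m$. Then for each $i\in[m]$, $$\mathbb{E}[e_i^\top y]=e_i^\top Ax,\qquad \operatorname{Var}(e_i^\top y)\le 2\|A\|_{2\to\infty}^2.$$
   Context: $[L]=\{1,\dots,L\}$; $e_i$ is the $i$th standard basis vector. $\|A\|_{2\to\infty}$ is the operator norm from $\ell_2$ to $\ell_\infty$, equal to the largest Euclidean norm of a row of $A$. Let $\sigma$ be the uniform probability measure on $S^{d-1}$ and $\mathrm{Hom}_j(\mathbb{R}^d)$ the homogeneous polynomials of degree $j$ in $d$ real variables. A projective $t$-design for $\mathbb{R}^d$ is a finite family $\{u_\ell\}_{\ell\in[L]}\subset S^{d-1}$ with $\frac1L\sum_\ell p(u_\ell)=\int_{S^{d-1}}p\,d\sigma$ for all $p\in\mathrm{Hom}_{2k}(\mathbb{R}^d)$, $k\in\{0,\dots,t\}$. *)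

theory Defs
  imports "HOL-Probability.Probability"
begin

text \<open>Conventions: a vector of R^d is a function nat \<Rightarrow> real whose relevant
coordinates are those with index < d (coordinates 0..d-1).\<close>

definition sqnorm :: "nat \<Rightarrow> (nat \<Rightarrow> real) \<Rightarrow> real" where
  "sqnorm d x = (\<Sum>i<d. (x i)^2)"

definition on_sphere :: "nat \<Rightarrow> (nat \<Rightarrow> real) \<Rightarrow> bool" where
  "on_sphere d x \<longleftrightarrow> sqnorm d x = 1"

text \<open>Uniform probability measure sigma on S^{d-1}: the push-forward of the
uniform (normalized Lebesgue) measure on the open unit ball under x \<mapsto> x/|x|.\<close>

definition unit_ball :: "nat \<Rightarrow> (nat \<Rightarrow> real) set" where
  "unit_ball d = {x \<in> space (PiM {..<d} (\<lambda>_. lborel)). sqnorm d x < 1}"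

definition sphere_measure :: "nat \<Rightarrow> (nat \<Rightarrow> real) measure" where
  "sphere_measure d =
     distr (uniform_measure (PiM {..<d} (\<lambda>_. lborel)) (unit_ball d))
           (PiM {..<d} (\<lambda>_. borel))
           (\<lambda>x. restrict (\<lambda>i. x i / sqrt (sqnorm d x)) {..<d})"

definition monomial_fun :: "nat \<Rightarrow> (nat \<Rightarrow> nat) \<Rightarrow> (nat \<Rightarrow> real) \<Rightarrow> real" where
  "monomial_fun d \<alpha> x = (\<Prod>i<d. (x i) ^ (\<alpha> i))"

definition Hom :: "nat \<Rightarrow> nat \<Rightarrow> ((nat \<Rightarrow> real) \<Rightarrow> real) set" where
  "Hom d j = {p. \<exists>S c. finite S \<and>
       (\<forall>\<alpha>\<in>S. (\<forall>i\<ge>d. \<alpha> i = 0) \<and> (\<Sum>i<d. \<alpha> i) = j) \<and>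
       (\<forall>x. p x = (\<Sum>\<alpha>\<in>S. c \<alpha> * monomial_fun d \<alpha> x))}"

definition projective_design ::
  "nat \<Rightarrow> nat \<Rightarrow> nat \<Rightarrow> (nat \<Rightarrow> nat \<Rightarrow> real) \<Rightarrow> bool" where
  "projective_design t d L u \<longleftrightarrow>
     (\<forall>l<L. on_sphere d (u l)) \<and>
     (\<forall>k\<le>t. \<forall>p\<in>Hom d (2*k).
        (1 / real L) * (\<Sum>l<L. p (u l)) = integral\<^sup>L (sphere_measure d) p)"

text \<open>The (2 \<rightarrow> \<infinity>) operator norm of an m\<times>n matrix, which equals the
largest Euclidean norm of a row.\<close>

definition norm_2_inf :: "nat \<Rightarrow> nat \<Rightarrow> (nat \<Rightarrow> nat \<Rightarrow> real) \<Rightarrow> real" where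
  "norm_2_inf m n A = Max {sqrt (\<Sum>j<n. (A i j)^2) | i. i < m}"

end

theory Submission
  imports Defs
begin

text \<open>
  Writing \<open>a = A i\<close> and \<open>Y = d (a\<cdot>u) (x\<cdot>u)\<close>, the mean and the second moment of \<open>Y\<close>
  over the design only involve its moments of degree 2 and 4, which by the design property are those
  of the uniform measure on the sphere. These are computed by symmetry: reflections of a coordinate
  and the Hadamard map of a coordinate plane preserve Lebesgue measure (they are products of
  shears), preserve the norm and commute with \<open>x \<mapsto> x / |x|\<close>, hence preserve the sphere measure.
  Reflections kill every moment with an odd exponent; the Hadamard map shows that \<open>E v\<^sub>j\<^sup>2\<close> and
  \<open>E v\<^sub>j\<^sup>4\<close> do not depend on \<open>j\<close> and that \<open>E v\<^sub>j\<^sup>4 = 3 E v\<^sub>j\<^sup>2 v\<^sub>k\<^sup>2\<close>, and \<open>|v| = 1\<close>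
  then gives \<open>E v\<^sub>j\<^sup>2 = 1/d\<close> and \<open>E v\<^sub>j\<^sup>2 v\<^sub>k\<^sup>2 = 1/(d(d+2))\<close>. Hence \<open>E Y = a\<cdot>x\<close> and
  \<open>E Y\<^sup>2 = d (|a|\<^sup>2 + 2 (a\<cdot>x)\<^sup>2) / (d + 2)\<close>, and Cauchy-Schwarz bounds the variance by \<open>2 |a|\<^sup>2\<close>.
\<close>

section \<open>Lebesgue measure under coordinate maps\<close>

definition lborel_pi :: "nat \<Rightarrow> (nat \<Rightarrow> real) measure" where
  "lborel_pi d = PiM {..<d} (\<lambda>_. lborel)"

interpretation lborel_product: product_sigma_finite "\<lambda>_::nat. lborel::real measure"
  by (simp add: product_sigma_finite_def lborel.sigma_finite_measure_axioms)

lemma sets_lborel_pi: "sets (lborel_pi d) = sets (PiM {..<d} (\<lambda>_. borel))"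
  unfolding lborel_pi_def by (rule sets_PiM_cong) auto

text \<open>Fubini in the coordinate j, followed by the translation and reflection invariance
  of the one-dimensional Lebesgue measure.\<close>

lemma distr_lborel_pi_fun_upd_affine:
  fixes g :: "(nat \<Rightarrow> real) \<Rightarrow> real"
  assumes j: "j < d" and c: "\<bar>c\<bar> = 1"
    and g[measurable]: "g \<in> borel_measurable (lborel_pi d)"
    and g_indep: "\<And>x y. g (x(j := y)) = g x"
  shows "distr (lborel_pi d) (lborel_pi d) (\<lambda>x. x(j := c * x j + g x)) = lborel_pi d"
proof -
  let ?P = "lborel_pi d" and ?Q = "PiM ({..<d} - {j}) (\<lambda>_. lborel::real measure)"
  let ?T = "\<lambda>x. x(j := c * x j + g x)"
  have T[measurable]: "?T \<in> ?P \<rightarrow>\<^sub>M ?P"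
    unfolding lborel_pi_def
    by (rule measurable_fun_upd[where J="{..<d}"]) (use j g in \<open>auto simp: lborel_pi_def\<close>)
  have P_insert: "?P = PiM (insert j ({..<d} - {j})) (\<lambda>_. lborel)"
    unfolding lborel_pi_def using j by (simp add: insert_absorb)
  have fubini: "(\<integral>\<^sup>+x. f x \<partial>?P) = (\<integral>\<^sup>+x. (\<integral>\<^sup>+y. f (x(j := y)) \<partial>lborel) \<partial>?Q)"
    if "f \<in> borel_measurable ?P" for f :: "_ \<Rightarrow> ennreal"
    unfolding P_insert
    by (rule lborel_product.product_nn_integral_insert) (use that P_insert in auto)
  show ?thesis
  proof (rule measure_eqI)
    fix A assume "A \<in> sets (distr ?P ?P ?T)"
    then have A[measurable]: "A \<in> sets ?P" by simp
    have line: "(\<integral>\<^sup>+y. indicator A (?T (x(j := y))) \<partial>lborel) = (\<integral>\<^sup>+y. indicator A (x(j := y)) \<partial>lborel)"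
      if x: "x \<in> space ?Q" for x
    proof -
      have "(\<lambda>y. x(j := y)) \<in> lborel \<rightarrow>\<^sub>M ?P"
        unfolding P_insert by (rule measurable_component_update) (use x in auto)
      then have "(\<lambda>y. indicator A (x(j := y)) :: ennreal) \<in> borel_measurable borel"
        by measurable
      from nn_integral_real_affine[OF this, of c "g x"] c
      show ?thesis by (auto simp: g_indep add.commute)
    qed
    have "emeasure (distr ?P ?P ?T) A = (\<integral>\<^sup>+x. indicator A (?T x) \<partial>?P)"
      using nn_integral_distr[OF T, of "indicator A"] by simp
    also have "\<dots> = (\<integral>\<^sup>+x. (\<integral>\<^sup>+y. indicator A (?T (x(j := y))) \<partial>lborel) \<partial>?Q)"
      by (rule fubini) measurable
    also have "\<dots> = (\<integral>\<^sup>+x. (\<integral>\<^sup>+y. indicator A (x(j := y)) \<partial>lborel) \<partial>?Q)"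
      by (rule nn_integral_cong) (rule line)
    also have "\<dots> = emeasure ?P A"
      by (simp add: fubini[symmetric])
    finally show "emeasure (distr ?P ?P ?T) A = emeasure ?P A" .
  qed simp
qed

definition coord_flip :: "nat \<Rightarrow> (nat \<Rightarrow> real) \<Rightarrow> nat \<Rightarrow> real" where
  "coord_flip j x = x(j := - x j)"

definition coord_shear :: "nat \<Rightarrow> nat \<Rightarrow> real \<Rightarrow> (nat \<Rightarrow> real) \<Rightarrow> nat \<Rightarrow> real" where
  "coord_shear j k t x = x(j := x j + t * x k)"

definition coord_hadamard :: "nat \<Rightarrow> nat \<Rightarrow> (nat \<Rightarrow> real) \<Rightarrow> nat \<Rightarrow> real" where
  "coord_hadamard j k x = x(j := (x j + x k) / sqrt 2, k := (x j - x k) / sqrt 2)"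

lemma measurable_coord_flip[measurable]: "j < d \<Longrightarrow> coord_flip j \<in> lborel_pi d \<rightarrow>\<^sub>M lborel_pi d"
  unfolding coord_flip_def lborel_pi_def
  by (rule measurable_fun_upd[where J="{..<d}"]) auto

lemma measurable_coord_shear[measurable]:
  "j < d \<Longrightarrow> k < d \<Longrightarrow> coord_shear j k t \<in> lborel_pi d \<rightarrow>\<^sub>M lborel_pi d"
  unfolding coord_shear_def lborel_pi_def
  by (rule measurable_fun_upd[where J="{..<d}"]) auto

lemma distr_lborel_pi_coord_flip: "j < d \<Longrightarrow> distr (lborel_pi d) (lborel_pi d) (coord_flip j) = lborel_pi d"
  using distr_lborel_pi_fun_upd_affine[of j d "-1" "\<lambda>_. 0"] unfolding coord_flip_def by simp

lemma distr_lborel_pi_coord_shear: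
  "j < d \<Longrightarrow> k < d \<Longrightarrow> j \<noteq> k \<Longrightarrow> distr (lborel_pi d) (lborel_pi d) (coord_shear j k t) = lborel_pi d"
  using distr_lborel_pi_fun_upd_affine[of j d 1 "\<lambda>x. t * x k"] unfolding coord_shear_def
  by (simp add: lborel_pi_def)

lemma coord_hadamard_eq_shears:
  assumes "j \<noteq> k"
  shows "coord_hadamard j k =
    coord_shear j k (1 - sqrt 2) \<circ> coord_shear k j (1 / sqrt 2) \<circ> coord_shear j k (1 - sqrt 2) \<circ> coord_flip k"
proof
  fix x
  have "sqrt 2 * sqrt 2 = (2::real)" by simp
  then show "coord_hadamard j k x = (coord_shear j k (1 - sqrt 2) \<circ> coord_shear k j (1 / sqrt 2)
      \<circ> coord_shear j k (1 - sqrt 2) \<circ> coord_flip k) x"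
    unfolding coord_hadamard_def coord_shear_def coord_flip_def using assms
    by (auto simp: fun_eq_iff field_simps)
qed

lemma measurable_coord_hadamard:
  "j < d \<Longrightarrow> k < d \<Longrightarrow> j \<noteq> k \<Longrightarrow> coord_hadamard j k \<in> lborel_pi d \<rightarrow>\<^sub>M lborel_pi d"
  by (simp add: coord_hadamard_eq_shears)

lemma distr_comp_eq_self:
  assumes [measurable]: "S \<in> M \<rightarrow>\<^sub>M M" "T \<in> M \<rightarrow>\<^sub>M M"
    and "distr M M S = M" "distr M M T = M"
  shows "distr M M (S \<circ> T) = M"
  using distr_distr[of S M M T M] assms by simp

lemma distr_lborel_pi_coord_hadamard:
  assumes "j < d" "k < d" "j \<noteq> k"
  shows "distr (lborel_pi d) (lborel_pi d) (coord_hadamard j k) = lborel_pi d"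
  using assms unfolding coord_hadamard_eq_shears[OF \<open>j \<noteq> k\<close>]
  by (intro distr_comp_eq_self distr_lborel_pi_coord_shear distr_lborel_pi_coord_flip) auto

section \<open>The sphere measure and its symmetries\<close>

definition sphere_proj :: "nat \<Rightarrow> (nat \<Rightarrow> real) \<Rightarrow> nat \<Rightarrow> real" where
  "sphere_proj d x = restrict (\<lambda>i. x i / sqrt (sqnorm d x)) {..<d}"

definition ball_measure :: "nat \<Rightarrow> (nat \<Rightarrow> real) measure" where
  "ball_measure d = uniform_measure (lborel_pi d) (unit_ball d)"

lemma sphere_measure_eq_distr:
  "sphere_measure d = distr (ball_measure d) (PiM {..<d} (\<lambda>_. borel)) (sphere_proj d)"
  unfolding sphere_measure_def ball_measure_def lborel_pi_def sphere_proj_def ..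

lemma unit_ball_sets[measurable]: "unit_ball d \<in> sets (lborel_pi d)"
  unfolding unit_ball_def lborel_pi_def sqnorm_def by measurable

lemma measurable_sphere_proj[measurable]: "sphere_proj d \<in> lborel_pi d \<rightarrow>\<^sub>M lborel_pi d"
  unfolding sphere_proj_def lborel_pi_def sqnorm_def by measurable

lemma measurable_sphere_proj_borel: "sphere_proj d \<in> lborel_pi d \<rightarrow>\<^sub>M PiM {..<d} (\<lambda>_. borel)"
  unfolding sphere_proj_def lborel_pi_def sqnorm_def by measurable

lemma sqnorm_ge_component_sq: "i < d \<Longrightarrow> (x i)\<^sup>2 \<le> sqnorm d x"
  unfolding sqnorm_def by (rule member_le_sum) auto

lemma emeasure_unit_ball_finite: "emeasure (lborel_pi d) (unit_ball d) \<noteq> \<infinity>"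
proof -
  have "unit_ball d \<subseteq> PiE {..<d} (\<lambda>_. {-1..1})"
  proof
    fix x assume x: "x \<in> unit_ball d"
    then have "\<bar>x i\<bar> \<le> 1" if "i < d" for i
      using sqnorm_ge_component_sq[OF that, of x] unfolding unit_ball_def
      by (auto simp flip: abs_square_le_1)
    then show "x \<in> PiE {..<d} (\<lambda>_. {-1..1})"
      using x unfolding unit_ball_def by (auto simp: space_PiM PiE_iff abs_le_iff)
  qed
  then have "emeasure (lborel_pi d) (unit_ball d) \<le> emeasure (lborel_pi d) (PiE {..<d} (\<lambda>_. {-1..1}))"
    by (intro emeasure_mono) (auto simp: lborel_pi_def)
  also have "\<dots> = 2 ^ d"
    unfolding lborel_pi_def by (subst lborel_product.emeasure_PiM) auto
  finally show ?thesis
    by (auto simp: top_unique power_eq_top_ennreal)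
qed

lemma emeasure_unit_ball_pos: "emeasure (lborel_pi d) (unit_ball d) \<noteq> 0"
proof -
  define c :: real where "c = 1 / (real d + 1)"
  have "PiE {..<d} (\<lambda>_. {-c<..<c}) \<subseteq> unit_ball d"
  proof
    fix x assume x: "x \<in> PiE {..<d} (\<lambda>_. {-c<..<c})"
    have "sqnorm d x \<le> (\<Sum>i<d. c\<^sup>2)"
      unfolding sqnorm_def
    proof (rule sum_mono)
      fix i assume "i \<in> {..<d}"
      then have "\<bar>x i\<bar> \<le> c" using x by (force simp: PiE_iff abs_le_iff)
      then show "(x i)\<^sup>2 \<le> c\<^sup>2" by (metis abs_ge_zero power2_abs power_mono)
    qed
    also have "\<dots> = real d / (real d + 1)\<^sup>2" by (simp add: c_def power_divide)
    also have "\<dots> < 1"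
      by (simp add: divide_less_eq power2_eq_square algebra_simps add_pos_nonneg)
    finally show "x \<in> unit_ball d"
      using x unfolding unit_ball_def by (auto simp: space_PiM lborel_pi_def PiE_iff)
  qed
  then have "emeasure (lborel_pi d) (PiE {..<d} (\<lambda>_. {-c<..<c})) \<le> emeasure (lborel_pi d) (unit_ball d)"
    by (intro emeasure_mono) auto
  moreover have "emeasure (lborel_pi d) (PiE {..<d} (\<lambda>_. {-c<..<c})) = (2 * c) ^ d"
    unfolding lborel_pi_def by (subst lborel_product.emeasure_PiM) (auto simp: c_def ennreal_power)
  ultimately show ?thesis by (auto simp: c_def)
qed

lemma prob_space_ball_measure: "prob_space (ball_measure d)"
  unfolding ball_measure_def
  by (rule prob_space_uniform_measure[OF emeasure_unit_ball_pos emeasure_unit_ball_finite])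

lemma prob_space_sphere_measure: "prob_space (sphere_measure d)"
  unfolding sphere_measure_eq_distr
  by (rule prob_space.prob_space_distr[OF prob_space_ball_measure])
     (simp add: ball_measure_def measurable_sphere_proj_borel cong: measurable_cong_sets)

lemma distr_ball_measure:
  assumes T[measurable]: "T \<in> lborel_pi d \<rightarrow>\<^sub>M lborel_pi d"
    and T_distr: "distr (lborel_pi d) (lborel_pi d) T = lborel_pi d"
    and T_sqnorm: "\<And>x. sqnorm d (T x) = sqnorm d x"
  shows "distr (ball_measure d) (ball_measure d) T = ball_measure d"
proof (rule measure_eqI)
  fix A assume "A \<in> sets (distr (ball_measure d) (ball_measure d) T)"
  then have A[measurable]: "A \<in> sets (lborel_pi d)" by (simp add: ball_measure_def)
  have "T -` (unit_ball d \<inter> A) \<inter> space (lborel_pi d) = unit_ball d \<inter> (T -` A \<inter> space (lborel_pi d))"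
    using measurable_space[OF T] T_sqnorm unfolding unit_ball_def by (auto simp: lborel_pi_def)
  then have "emeasure (lborel_pi d) (unit_ball d \<inter> (T -` A \<inter> space (lborel_pi d)))
      = emeasure (distr (lborel_pi d) (lborel_pi d) T) (unit_ball d \<inter> A)"
    by (simp add: emeasure_distr)
  then show "emeasure (distr (ball_measure d) (ball_measure d) T) A = emeasure (ball_measure d) A"
    by (simp add: T_distr ball_measure_def emeasure_distr cong: measurable_cong_sets)
qed simp

lemma integral_sphere_measure_invariant:
  assumes T[measurable]: "T \<in> lborel_pi d \<rightarrow>\<^sub>M lborel_pi d"
    and T_distr: "distr (lborel_pi d) (lborel_pi d) T = lborel_pi d"
    and T_sqnorm: "\<And>x. sqnorm d (T x) = sqnorm d x"
    and T_proj: "\<And>x. sphere_proj d (T x) = T (sphere_proj d x)"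
    and g[measurable]: "(g :: _ \<Rightarrow> real) \<in> borel_measurable (lborel_pi d)"
  shows "(\<integral>v. g v \<partial>sphere_measure d) = (\<integral>v. g (T v) \<partial>sphere_measure d)"
proof -
  let ?B = "PiM {..<d} (\<lambda>_. borel :: real measure)"
  have proj: "sphere_proj d \<in> ball_measure d \<rightarrow>\<^sub>M ?B"
    using measurable_sphere_proj_borel by (simp add: ball_measure_def cong: measurable_cong_sets)
  have meas_B: "f \<in> borel_measurable ?B" if "f \<in> borel_measurable (lborel_pi d)" for f :: "_ \<Rightarrow> real"
    using that by (simp add: sets_lborel_pi cong: measurable_cong_sets)
  have "(\<integral>v. g v \<partial>sphere_measure d) = (\<integral>x. g (sphere_proj d x) \<partial>ball_measure d)"
    unfolding sphere_measure_eq_distr by (rule integral_distr[OF proj meas_B[OF g]])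
  also have "\<dots> = (\<integral>x. g (sphere_proj d x) \<partial>distr (ball_measure d) (ball_measure d) T)"
    by (simp add: distr_ball_measure[OF T T_distr T_sqnorm])
  also have "\<dots> = (\<integral>x. g (T (sphere_proj d x)) \<partial>ball_measure d)"
    by (subst integral_distr) (simp_all add: ball_measure_def T_proj cong: measurable_cong_sets)
  also have "\<dots> = (\<integral>v. g (T v) \<partial>sphere_measure d)"
    unfolding sphere_measure_eq_distr by (rule integral_distr[OF proj meas_B, symmetric]) simp
  finally show ?thesis .
qed

lemma sqnorm_coord_flip: "j < d \<Longrightarrow> sqnorm d (coord_flip j x) = sqnorm d x"
  unfolding sqnorm_def coord_flip_def by (rule sum.cong) auto

lemma sphere_proj_coord_flip: "j < d \<Longrightarrow> sphere_proj d (coord_flip j x) = coord_flip j (sphere_proj d x)"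
  using sqnorm_coord_flip[of j d x] unfolding sphere_proj_def by (auto simp: fun_eq_iff coord_flip_def)

lemma sqnorm_coord_hadamard:
  assumes "j < d" "k < d" "j \<noteq> k"
  shows "sqnorm d (coord_hadamard j k x) = sqnorm d x"
proof -
  have split: "sqnorm d y = (\<Sum>i\<in>{..<d} - {j, k}. (y i)\<^sup>2) + (y j)\<^sup>2 + (y k)\<^sup>2" for y
    unfolding sqnorm_def using assms
    by (subst sum.remove[of _ j], simp, simp, subst sum.remove[of _ k])
       (auto simp: algebra_simps Diff_insert2[symmetric] insert_commute)
  have "(coord_hadamard j k x j)\<^sup>2 + (coord_hadamard j k x k)\<^sup>2 = (x j)\<^sup>2 + (x k)\<^sup>2"
    using assms by (simp add: coord_hadamard_def power_divide power2_eq_square field_simps)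
  moreover have "(\<Sum>i\<in>{..<d} - {j, k}. (coord_hadamard j k x i)\<^sup>2) = (\<Sum>i\<in>{..<d} - {j, k}. (x i)\<^sup>2)"
    by (rule sum.cong) (auto simp: coord_hadamard_def)
  ultimately show ?thesis by (simp add: split)
qed

lemma sphere_proj_coord_hadamard:
  assumes "j < d" "k < d" "j \<noteq> k"
  shows "sphere_proj d (coord_hadamard j k x) = coord_hadamard j k (sphere_proj d x)"
  using sqnorm_coord_hadamard[OF assms, of x] assms unfolding sphere_proj_def
  by (auto simp: fun_eq_iff coord_hadamard_def add_divide_distrib diff_divide_distrib mult.commute)

lemma AE_lborel_pi_sqnorm_nonzero:
  assumes "d > 0"
  shows "AE x in lborel_pi d. sqnorm d x \<noteq> 0"
proof (rule AE_I')
  have "emeasure (lborel_pi d) (PiE {..<d} (\<lambda>_. {0})) = (\<Prod>i<d. emeasure lborel {0::real})"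
    unfolding lborel_pi_def by (rule lborel_product.emeasure_PiM) auto
  then show "PiE {..<d} (\<lambda>_. {0}) \<in> null_sets (lborel_pi d)"
    using assms unfolding lborel_pi_def by (intro null_setsI sets_PiM_I_finite) auto
  show "{x \<in> space (lborel_pi d). \<not> sqnorm d x \<noteq> 0} \<subseteq> PiE {..<d} (\<lambda>_. {0})"
    by (auto simp: lborel_pi_def space_PiM sqnorm_def PiE_iff sum_nonneg_eq_0_iff fun_eq_iff extensional_def)
qed

lemma AE_sphere_measure_sqnorm:
  assumes "d > 0"
  shows "AE v in sphere_measure d. sqnorm d v = 1"
proof -
  have "AE x in ball_measure d. sqnorm d x \<noteq> 0"
    unfolding ball_measure_def
    by (rule AE_uniform_measureI) (use AE_lborel_pi_sqnorm_nonzero[OF assms] in auto)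
  then have "AE x in ball_measure d. sqnorm d (sphere_proj d x) = 1"
    by eventually_elim (simp add: sqnorm_def sphere_proj_def power_divide sum_divide_distrib[symmetric] sum_nonneg)
  then show ?thesis
    unfolding sphere_measure_eq_distr
    by (subst AE_distr_iff)
       (simp_all add: ball_measure_def measurable_sphere_proj_borel sqnorm_def cong: measurable_cong_sets)
qed

section \<open>Moments of the sphere measure\<close>

definition sphere_moment :: "nat \<Rightarrow> nat list \<Rightarrow> real" where
  "sphere_moment d xs = (\<integral>v. prod_list (map v xs) \<partial>sphere_measure d)"

lemma borel_measurable_prod_list_coords:
  "set xs \<subseteq> {..<d} \<Longrightarrow> (\<lambda>v. prod_list (map v xs)) \<in> borel_measurable (lborel_pi d)"
  by (induction xs) (auto simp: lborel_pi_def)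

lemma abs_sphere_proj_le_1: "i < d \<Longrightarrow> \<bar>sphere_proj d x i\<bar> \<le> 1"
  using real_sqrt_le_mono[OF sqnorm_ge_component_sq[of i d x]]
  by (cases "sqnorm d x = 0") (auto simp: sphere_proj_def abs_div divide_le_eq_1)

lemma integrable_sphere_monomial:
  assumes "set xs \<subseteq> {..<d}"
  shows "integrable (sphere_measure d) (\<lambda>v. prod_list (map v xs))"
proof -
  interpret prob_space "ball_measure d" by (rule prob_space_ball_measure)
  have "\<bar>prod_list (map (sphere_proj d x) xs)\<bar> \<le> 1" for x
    using assms by (induction xs) (auto simp: abs_mult intro!: mult_le_one abs_sphere_proj_le_1)
  moreover have "(\<lambda>x. prod_list (map (sphere_proj d x) xs)) \<in> borel_measurable (ball_measure d)"
    using measurable_comp[OF measurable_sphere_proj borel_measurable_prod_list_coords[OF assms]]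
    by (simp add: ball_measure_def comp_def)
  ultimately have "integrable (ball_measure d) (\<lambda>x. prod_list (map (sphere_proj d x) xs))"
    by (intro integrable_const_bound[where B=1]) auto
  then show ?thesis
    unfolding sphere_measure_eq_distr
    using borel_measurable_prod_list_coords[OF assms] measurable_sphere_proj_borel
    by (subst integrable_distr_eq) (simp_all add: ball_measure_def sets_lborel_pi cong: measurable_cong_sets)
qed

lemma sphere_moment_nil: "sphere_moment d [] = 1"
  using prob_space.prob_space[OF prob_space_sphere_measure] by (simp add: sphere_moment_def)

lemma sphere_moment_perm: "mset xs = mset ys \<Longrightarrow> sphere_moment d xs = sphere_moment d ys"
  unfolding sphere_moment_def by (metis mset_map prod_mset_prod_list)

lemma sphere_moment_odd_count:
  assumes j: "j < d" and xs: "set xs \<subseteq> {..<d}" and odd: "odd (count_list xs j)"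
  shows "sphere_moment d xs = 0"
proof -
  have flip: "prod_list (map (coord_flip j v) xs) = (-1) ^ count_list xs j * prod_list (map v xs)" for v
    by (induction xs) (auto simp: coord_flip_def)
  have "sphere_moment d xs = (\<integral>v. prod_list (map (coord_flip j v) xs) \<partial>sphere_measure d)"
    unfolding sphere_moment_def
    using j by (intro integral_sphere_measure_invariant borel_measurable_prod_list_coords[OF xs]
        distr_lborel_pi_coord_flip sqnorm_coord_flip sphere_proj_coord_flip) auto
  also have "\<dots> = - sphere_moment d xs"
    using odd by (simp add: flip sphere_moment_def)
  finally show ?thesis by simp
qed

lemma integral_sphere_linear_combination:
  "(\<forall>(c, ys)\<in>set ps. set ys \<subseteq> {..<d}) \<Longrightarrow>
    integrable (sphere_measure d) (\<lambda>v. \<Sum>(c, ys)\<leftarrow>ps. c * prod_list (map v ys)) \<and>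
    (\<integral>v. (\<Sum>(c, ys)\<leftarrow>ps. c * prod_list (map v ys)) \<partial>sphere_measure d)
      = (\<Sum>(c, ys)\<leftarrow>ps. c * sphere_moment d ys)"
proof (induction ps)
  case (Cons p ps)
  obtain c ys where p: "p = (c, ys)" by force
  have "integrable (sphere_measure d) (\<lambda>v. c * prod_list (map v ys))"
    using Cons.prems p by (auto intro!: integrable_sphere_monomial)
  with Cons p show ?case by (simp add: sphere_moment_def)
qed simp

lemma sphere_moment_coord_hadamard:
  assumes jk: "j < d" "k < d" "j \<noteq> k" and xs: "set xs \<subseteq> {..<d}"
    and ps: "\<forall>(c, ys)\<in>set ps. set ys \<subseteq> {..<d}"
    and expand: "\<And>v. prod_list (map (coord_hadamard j k v) xs) = (\<Sum>(c, ys)\<leftarrow>ps. c * prod_list (map v ys))"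
  shows "sphere_moment d xs = (\<Sum>(c, ys)\<leftarrow>ps. c * sphere_moment d ys)"
proof -
  have "sphere_moment d xs = (\<integral>v. (\<Sum>(c, ys)\<leftarrow>ps. c * prod_list (map v ys)) \<partial>sphere_measure d)"
    unfolding sphere_moment_def expand[symmetric]
    using jk by (intro integral_sphere_measure_invariant borel_measurable_prod_list_coords[OF xs]
        measurable_coord_hadamard distr_lborel_pi_coord_hadamard sqnorm_coord_hadamard
        sphere_proj_coord_hadamard)
  then show ?thesis
    using integral_sphere_linear_combination[OF ps] by simp
qed

lemma sum_sphere_moment_2:
  assumes "d > 0"
  shows "(\<Sum>j<d. sphere_moment d [j, j]) = 1"
proof -
  interpret prob_space "sphere_measure d" by (rule prob_space_sphere_measure)
  have "(\<integral>v. sqnorm d v \<partial>sphere_measure d) = (\<Sum>j<d. sphere_moment d [j, j])"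
    unfolding sqnorm_def power2_eq_square sphere_moment_def
    by (subst Bochner_Integration.integral_sum) (auto intro: integrable_sphere_monomial[of "[_, _]", simplified])
  also have "(\<integral>v. sqnorm d v \<partial>sphere_measure d) = (\<integral>v. 1 \<partial>sphere_measure d)"
    using AE_sphere_measure_sqnorm[OF assms]
    by (intro integral_cong_AE) (auto simp: sphere_measure_def sqnorm_def)
  finally show ?thesis by (simp add: prob_space)
qed

lemma sum_sphere_moment_4:
  assumes "d > 0"
  shows "(\<Sum>j<d. \<Sum>k<d. sphere_moment d [j, j, k, k]) = 1"
proof -
  interpret prob_space "sphere_measure d" by (rule prob_space_sphere_measure)
  have "(\<integral>v. (sqnorm d v)\<^sup>2 \<partial>sphere_measure d) = (\<Sum>j<d. \<Sum>k<d. sphere_moment d [j, j, k, k])"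
    unfolding sqnorm_def power2_eq_square sum_product sphere_moment_def
    by (subst Bochner_Integration.integral_sum)
       (auto intro!: sum.cong Bochner_Integration.integral_sum
         integrable_sphere_monomial[of "[_, _, _, _]", simplified] simp: mult.assoc)
  also have "(\<integral>v. (sqnorm d v)\<^sup>2 \<partial>sphere_measure d) = (\<integral>v. 1 \<partial>sphere_measure d)"
    using AE_sphere_measure_sqnorm[OF assms]
    by (intro integral_cong_AE) (auto simp: sphere_measure_def sqnorm_def)
  finally show ?thesis by (simp add: prob_space)
qed

lemma coord_hadamard_apply:
  assumes "j \<noteq> k"
  shows "coord_hadamard j k v j = (v j + v k) / sqrt 2" "coord_hadamard j k v k = (v j - v k) / sqrt 2"
  using assms by (simp_all add: coord_hadamard_def)

lemma hadamard_square:
  fixes x y :: real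
  shows "((x + y) / sqrt 2)\<^sup>2 = x\<^sup>2 / 2 + x * y + y\<^sup>2 / 2"
  by (simp add: power_divide power2_eq_square field_simps)

lemma hadamard_fourth_powers:
  fixes x y :: real
  shows "((x + y) / sqrt 2) ^ 4 = x^4/4 + x^3*y + 3/2*x^2*y^2 + x*y^3 + y^4/4"
    and "((x - y) / sqrt 2) ^ 4 = x^4/4 - x^3*y + 3/2*x^2*y^2 - x*y^3 + y^4/4"
proof -
  have "sqrt 2 ^ 4 = (4::real)"
    using power_mult[of "sqrt (2::real)" 2 2] by simp
  then show "((x + y) / sqrt 2) ^ 4 = x^4/4 + x^3*y + 3/2*x^2*y^2 + x*y^3 + y^4/4"
    and "((x - y) / sqrt 2) ^ 4 = x^4/4 - x^3*y + 3/2*x^2*y^2 - x*y^3 + y^4/4"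
    by (simp_all add: power_divide) (simp_all add: field_simps power2_eq_square power3_eq_cube power4_eq_xxxx)
qed

lemma prod_list_coord_hadamard_2:
  assumes "a \<noteq> b"
  shows "prod_list (map (coord_hadamard a b v) [a, a])
    = (\<Sum>(c, ys)\<leftarrow>[(1/2, [a, a]), (1, [a, b]), (1/2, [b, b])]. c * prod_list (map v ys))"
  using assms by (simp add: coord_hadamard_apply power2_eq_square[symmetric] hadamard_square)

lemma sphere_moment_2:
  assumes "j < d" "k < d"
  shows "sphere_moment d [j, k] = (if j = k then 1 / real d else 0)"
proof -
  have off_diag: "sphere_moment d [a, b] = 0" if "a < d" "b < d" "a \<noteq> b" for a b
    by (rule sphere_moment_odd_count[of a]) (use that in auto)
  have diag: "sphere_moment d [a, a] = sphere_moment d [0, 0]" if "a < d" for a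
  proof (cases "a = 0")
    case False
    have "sphere_moment d [a, a] = (\<Sum>(c, ys)\<leftarrow>[(1/2, [a, a]), (1, [a, 0]), (1/2, [0, 0])]. c * sphere_moment d ys)"
      using that False
      by (intro sphere_moment_coord_hadamard[of a d 0] prod_list_coord_hadamard_2) auto
    with off_diag[of a 0] that False show ?thesis by simp
  qed simp
  have "(\<Sum>j<d. sphere_moment d [j, j]) = (\<Sum>j<d. sphere_moment d [0, 0])"
    by (intro sum.cong refl diag) simp
  then have "sphere_moment d [0, 0] = 1 / real d"
    using sum_sphere_moment_2[of d] assms by (simp add: field_simps)
  then show ?thesis
    using assms diag[of j] off_diag[of j k] by auto
qed

lemma prod_list_coord_hadamard_4:
  assumes "a \<noteq> b"
  shows "prod_list (map (coord_hadamard a b v) [a, a, a, a]) = (\<Sum>(c, ys)\<leftarrow>[(1/4, [a, a, a, a]), (1, [a, a, a, b]),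
        (3/2, [a, a, b, b]), (1, [a, b, b, b]), (1/4, [b, b, b, b])]. c * prod_list (map v ys))"
    and "prod_list (map (coord_hadamard a b v) [b, b, b, b]) = (\<Sum>(c, ys)\<leftarrow>[(1/4, [a, a, a, a]), (-1, [a, a, a, b]),
        (3/2, [a, a, b, b]), (-1, [a, b, b, b]), (1/4, [b, b, b, b])]. c * prod_list (map v ys))"
  using assms
  by (simp_all add: mult.assoc[symmetric] power4_eq_xxxx[symmetric] coord_hadamard_apply hadamard_fourth_powers)
     (simp_all add: power4_eq_xxxx power3_eq_cube power2_eq_square algebra_simps)

lemma sphere_moment_4_hadamard:
  assumes ab: "a < d" "b < d" "a \<noteq> b"
  shows "sphere_moment d [a, a, a, a] = (\<Sum>(c, ys)\<leftarrow>[(1/4, [a, a, a, a]), (1, [a, a, a, b]),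
        (3/2, [a, a, b, b]), (1, [a, b, b, b]), (1/4, [b, b, b, b])]. c * sphere_moment d ys)"
  and "sphere_moment d [b, b, b, b] = (\<Sum>(c, ys)\<leftarrow>[(1/4, [a, a, a, a]), (-1, [a, a, a, b]),
        (3/2, [a, a, b, b]), (-1, [a, b, b, b]), (1/4, [b, b, b, b])]. c * sphere_moment d ys)"
  by (intro sphere_moment_coord_hadamard[of a d b] prod_list_coord_hadamard_4; use ab in simp)+

lemma sphere_moment_4_diag:
  assumes "d > 0"
  shows "a < d \<Longrightarrow> sphere_moment d [a, a, a, a] = 3 / (real d * (real d + 2))"
    and "a < d \<Longrightarrow> b < d \<Longrightarrow> a \<noteq> b \<Longrightarrow> sphere_moment d [a, a, b, b] = 1 / (real d * (real d + 2))"
proof -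
  have hadamard: "sphere_moment d [a, a, a, a] = sphere_moment d [b, b, b, b]
      \<and> sphere_moment d [a, a, b, b] = sphere_moment d [a, a, a, a] / 3"
    if ab: "a < d" "b < d" "a \<noteq> b" for a b
  proof -
    have "sphere_moment d [a, a, a, b] = 0" "sphere_moment d [a, b, b, b] = 0"
      by (rule sphere_moment_odd_count[of b], use ab in auto)
         (rule sphere_moment_odd_count[of a], use ab in auto)
    with sphere_moment_4_hadamard[OF ab, simplified] show ?thesis
      by linarith
  qed
  define \<alpha> where "\<alpha> = sphere_moment d [0, 0, 0, 0]"
  have diag: "sphere_moment d [a, a, a, a] = \<alpha>" if "a < d" for a
    using hadamard[of a 0] that unfolding \<alpha>_def by (cases "a = 0") auto
  have pair: "sphere_moment d [a, a, b, b] = \<alpha> / 3" if "a < d" "b < d" "a \<noteq> b" for a b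
    using hadamard[OF that] diag that by simp
  have "(\<Sum>j<d. \<Sum>k<d. sphere_moment d [j, j, k, k]) = (\<Sum>j<d. \<Sum>k<d. \<alpha> / 3 + (if k = j then 2 * \<alpha> / 3 else 0))"
    by (intro sum.cong refl) (auto simp: diag pair)
  then have "\<alpha> * (real d * (real d + 2)) = 3"
    using sum_sphere_moment_4[OF assms] by (simp add: sum.distrib algebra_simps)
  then have "\<alpha> = 3 / (real d * (real d + 2))"
    using assms by (simp add: eq_divide_eq)
  then show "a < d \<Longrightarrow> sphere_moment d [a, a, a, a] = 3 / (real d * (real d + 2))"
    and "a < d \<Longrightarrow> b < d \<Longrightarrow> a \<noteq> b \<Longrightarrow> sphere_moment d [a, a, b, b] = 1 / (real d * (real d + 2))"
    by (simp_all add: diag pair)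
qed

lemma odd_count_of_unpaired:
  fixes j k p q :: nat
  assumes "\<not> (j = k \<and> p = q)" "\<not> (j = p \<and> k = q)" "\<not> (j = q \<and> k = p)"
  shows "odd (count_list [j, k, p, q] j) \<or> odd (count_list [j, k, p, q] k) \<or> odd (count_list [j, k, p, q] p)"
  using assms by auto

lemma sphere_moment_4:
  assumes "j < d" "k < d" "p < d" "q < d"
  shows "sphere_moment d [j, k, p, q] =
    (of_bool (j = k \<and> p = q) + of_bool (j = p \<and> k = q) + of_bool (j = q \<and> k = p)) / (real d * (real d + 2))"
proof -
  have d: "d > 0" using assms by simp
  note diag = sphere_moment_4_diag[OF d]
  have perm: "sphere_moment d [a, b, a, b] = sphere_moment d [a, a, b, b]"
    "sphere_moment d [a, b, b, a] = sphere_moment d [a, a, b, b]" for a b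
    by (rule sphere_moment_perm; simp add: add_mset_commute)+
  consider "j = k" "k = p" "p = q" | "j = k" "p = q" "j \<noteq> p" | "j = p" "k = q" "j \<noteq> k"
    | "j = q" "k = p" "j \<noteq> k" | "\<not> (j = k \<and> p = q)" "\<not> (j = p \<and> k = q)" "\<not> (j = q \<and> k = p)"
    by blast
  then show ?thesis
  proof cases
    case 1
    then show ?thesis using diag(1)[of j] assms by simp
  next
    case 2
    then show ?thesis using diag(2)[of j p] assms by simp
  next
    case 3
    then show ?thesis using diag(2)[of j k] perm(1)[of j k] assms by simp
  next
    case 4
    then show ?thesis using diag(2)[of j k] perm(2)[of j k] assms by simp
  next
    case 5
    have xs: "set [j, k, p, q] \<subseteq> {..<d}" using assms by simp
    from odd_count_of_unpaired[OF 5] have "sphere_moment d [j, k, p, q] = 0"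
      by (elim disjE) (use assms in \<open>simp_all add: sphere_moment_odd_count[OF _ xs]\<close>)
    moreover have "of_bool (j = k \<and> p = q) + of_bool (j = p \<and> k = q) + of_bool (j = q \<and> k = p) = (0::real)"
      by (simp only: 5 of_bool_eq(1))
    ultimately show ?thesis by simp
  qed
qed

section \<open>Moments of projective designs\<close>

lemma monomial_fun_count_list:
  "set xs \<subseteq> {..<d} \<Longrightarrow> monomial_fun d (count_list xs) v = prod_list (map v xs)"
proof (induction xs)
  case (Cons a xs)
  have "monomial_fun d (count_list (a # xs)) v = (\<Prod>i<d. (if i = a then v i else 1) * v i ^ count_list xs i)"
    unfolding monomial_fun_def by (rule prod.cong) auto
  also have "\<dots> = v a * monomial_fun d (count_list xs) v"
    using Cons.prems by (simp add: prod.distrib monomial_fun_def prod.delta)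
  also have "\<dots> = v a * prod_list (map v xs)"
    using Cons by simp
  finally show ?case by (simp only: list.map prod_list.Cons)
qed (simp add: monomial_fun_def)

lemma prod_list_coords_in_Hom:
  assumes "set xs \<subseteq> {..<d}"
  shows "(\<lambda>v. prod_list (map v xs)) \<in> Hom d (length xs)"
proof -
  have "\<forall>i\<ge>d. count_list xs i = 0" using assms by (auto simp: count_list_0_iff)
  then show ?thesis
    unfolding Hom_def using assms
    by (intro CollectI exI[of _ "{count_list xs}"] exI[of _ "\<lambda>_. 1"])
       (simp add: monomial_fun_count_list sum_count_set)
qed

lemma design_average_monomial:
  assumes "projective_design t d L u" "set xs \<subseteq> {..<d}" "length xs = 2 * k" "k \<le> t"
  shows "(1 / real L) * (\<Sum>l<L. prod_list (map (u l) xs)) = sphere_moment d xs"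
proof -
  have hom: "(\<lambda>v. prod_list (map v xs)) \<in> Hom d (2 * k)"
    using prod_list_coords_in_Hom[OF assms(2)] assms(3) by simp
  have "\<forall>k\<le>t. \<forall>p\<in>Hom d (2 * k). (1 / real L) * (\<Sum>l<L. p (u l)) = integral\<^sup>L (sphere_measure d) p"
    using assms(1) unfolding projective_design_def by (rule conjunct2)
  from this[rule_format, OF assms(4) hom] show ?thesis
    by (simp add: sphere_moment_def)
qed

lemma projective_design_nonempty:
  assumes "projective_design t d L u"
  shows "L > 0"
  using design_average_monomial[OF assms, of "[]" 0] sphere_moment_nil by (cases L) auto

section \<open>Averages of products of linear forms\<close>

lemma sum_mult_sum_expand:
  "(\<Sum>l\<in>L. (\<Sum>j\<in>J. a j * w l j) * (\<Sum>k\<in>J. b k * w l k))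
    = (\<Sum>j\<in>J. \<Sum>k\<in>J. a j * b k * (\<Sum>l\<in>L. w l j * w l k :: real))"
proof -
  have "(\<Sum>l\<in>L. (\<Sum>j\<in>J. a j * w l j) * (\<Sum>k\<in>J. b k * w l k)) = (\<Sum>l\<in>L. \<Sum>j\<in>J. \<Sum>k\<in>J. a j * b k * (w l j * w l k))"
    by (simp add: sum_product mult_ac)
  also have "\<dots> = (\<Sum>j\<in>J. \<Sum>k\<in>J. \<Sum>l\<in>L. a j * b k * (w l j * w l k))"
    by (subst sum.swap) (simp add: sum.swap[of _ L])
  finally show ?thesis by (simp add: sum_distrib_left)
qed

lemma sum_mult_sum_expand4:
  "(\<Sum>l\<in>L. (\<Sum>j\<in>J. a j * w l j) * (\<Sum>k\<in>J. b k * w l k) * (\<Sum>p\<in>J. c p * w l p) * (\<Sum>q\<in>J. e q * w l q))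
    = (\<Sum>j\<in>J. \<Sum>k\<in>J. \<Sum>p\<in>J. \<Sum>q\<in>J. a j * b k * c p * e q * (\<Sum>l\<in>L. w l j * w l k * w l p * w l q :: real))"
proof -
  have "(\<Sum>l\<in>L. (\<Sum>j\<in>J. a j * w l j) * (\<Sum>k\<in>J. b k * w l k) * (\<Sum>p\<in>J. c p * w l p) * (\<Sum>q\<in>J. e q * w l q))
    = (\<Sum>l\<in>L. \<Sum>j\<in>J. \<Sum>k\<in>J. \<Sum>p\<in>J. \<Sum>q\<in>J. a j * b k * c p * e q * (w l j * w l k * w l p * w l q))"
  proof (rule sum.cong[OF refl])
    fix l
    have "(\<Sum>j\<in>J. a j * w l j) * (\<Sum>k\<in>J. b k * w l k) * (\<Sum>p\<in>J. c p * w l p) * (\<Sum>q\<in>J. e q * w l q)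
      = (\<Sum>j\<in>J. \<Sum>k\<in>J. \<Sum>p\<in>J. \<Sum>q\<in>J. (a j * w l j) * (b k * w l k) * (c p * w l p) * (e q * w l q))"
      by (simp only: sum_distrib_left[symmetric] sum_distrib_right[symmetric])
    then show "(\<Sum>j\<in>J. a j * w l j) * (\<Sum>k\<in>J. b k * w l k) * (\<Sum>p\<in>J. c p * w l p) * (\<Sum>q\<in>J. e q * w l q)
      = (\<Sum>j\<in>J. \<Sum>k\<in>J. \<Sum>p\<in>J. \<Sum>q\<in>J. a j * b k * c p * e q * (w l j * w l k * w l p * w l q))"
      by (simp add: mult_ac)
  qed
  also have "\<dots> = (\<Sum>j\<in>J. \<Sum>k\<in>J. \<Sum>p\<in>J. \<Sum>q\<in>J. \<Sum>l\<in>L. a j * b k * c p * e q * (w l j * w l k * w l p * w l q))"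
    by (subst sum.swap) (simp add: sum.swap[of _ L])
  finally show ?thesis by (simp add: sum_distrib_left)
qed

lemma sum_if_const_cond: "(\<Sum>x\<in>A. if P then f x else 0) = (if P then sum f A else 0)"
  by simp

lemma of_bool_conj_if: "of_bool (P \<and> Q) = (if P then if Q then 1 else 0 else 0)"
  by simp

lemma average_bilinear_isotropic:
  fixes u :: "nat \<Rightarrow> nat \<Rightarrow> real"
  assumes moment: "\<And>j k. j < n \<Longrightarrow> k < n \<Longrightarrow> (1 / real L) * (\<Sum>l<L. u l j * u l k) = (if j = k then s else 0)"
  shows "(1 / real L) * (\<Sum>l<L. (\<Sum>j<n. a j * u l j) * (\<Sum>k<n. b k * u l k)) = s * (\<Sum>j<n. a j * b j)"
proof -
  have "(1 / real L) * (\<Sum>l<L. (\<Sum>j<n. a j * u l j) * (\<Sum>k<n. b k * u l k))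
      = (\<Sum>j<n. \<Sum>k<n. a j * b k * ((1 / real L) * (\<Sum>l<L. u l j * u l k)))"
    unfolding sum_mult_sum_expand by (simp add: sum_distrib_left mult_ac)
  also have "\<dots> = (\<Sum>j<n. \<Sum>k<n. a j * b k * (if j = k then s else 0))"
    by (intro sum.cong refl) (simp only: moment lessThan_iff)
  also have "\<dots> = s * (\<Sum>j<n. a j * b j)"
    by (simp add: if_distrib[of "\<lambda>x. _ * x"] sum.delta sum_distrib_left mult_ac cong: if_cong)
  finally show ?thesis .
qed

lemma average_quartic_isotropic:
  fixes u :: "nat \<Rightarrow> nat \<Rightarrow> real"
  assumes moment: "\<And>j k p q. j < n \<Longrightarrow> k < n \<Longrightarrow> p < n \<Longrightarrow> q < n \<Longrightarrow>
      (1 / real L) * (\<Sum>l<L. u l j * u l k * u l p * u l q)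
        = s * (of_bool (j = k \<and> p = q) + of_bool (j = p \<and> k = q) + of_bool (j = q \<and> k = p))"
  shows "(1 / real L) * (\<Sum>l<L. (\<Sum>j<n. a j * u l j) * (\<Sum>k<n. b k * u l k) * (\<Sum>p<n. c p * u l p) * (\<Sum>q<n. e q * u l q))
    = s * ((\<Sum>j<n. a j * b j) * (\<Sum>j<n. c j * e j) + (\<Sum>j<n. a j * c j) * (\<Sum>j<n. b j * e j)
        + (\<Sum>j<n. a j * e j) * (\<Sum>j<n. b j * c j))"
proof -
  have "(1 / real L) * (\<Sum>l<L. (\<Sum>j<n. a j * u l j) * (\<Sum>k<n. b k * u l k) * (\<Sum>p<n. c p * u l p) * (\<Sum>q<n. e q * u l q))
      = (\<Sum>j<n. \<Sum>k<n. \<Sum>p<n. \<Sum>q<n. a j * b k * c p * e q * ((1 / real L) * (\<Sum>l<L. u l j * u l k * u l p * u l q)))"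
    unfolding sum_mult_sum_expand4 by (simp add: sum_distrib_left mult_ac)
  also have "\<dots> = (\<Sum>j<n. \<Sum>k<n. \<Sum>p<n. \<Sum>q<n. a j * b k * c p * e q *
      (s * (of_bool (j = k \<and> p = q) + of_bool (j = p \<and> k = q) + of_bool (j = q \<and> k = p))))"
    by (intro sum.cong refl) (simp only: moment lessThan_iff)
  also have "\<dots> = s * (\<Sum>j<n. \<Sum>k<n. \<Sum>p<n. \<Sum>q<n. a j * b k * c p * e q *
      (of_bool (j = k \<and> p = q) + of_bool (j = p \<and> k = q) + of_bool (j = q \<and> k = p)))"
    by (simp add: sum_distrib_left mult_ac)
  also have "\<dots> = s * ((\<Sum>j<n. a j * b j) * (\<Sum>j<n. c j * e j) + (\<Sum>j<n. a j * c j) * (\<Sum>j<n. b j * e j)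
        + (\<Sum>j<n. a j * e j) * (\<Sum>j<n. b j * c j))"
    by (simp only: distrib_left sum.distrib of_bool_conj_if)
       (simp add: if_distrib[of "\<lambda>x. _ * x"] sum_if_const_cond sum.delta sum.delta' sum_product mult_ac cong: if_cong)
  finally show ?thesis .
qed

lemma design_second_moment:
  assumes "projective_design t d L u" "1 \<le> t" "j < d" "k < d"
  shows "(1 / real L) * (\<Sum>l<L. u l j * u l k) = (if j = k then 1 / real d else 0)"
  using design_average_monomial[OF assms(1), of "[j, k]" 1] sphere_moment_2[OF assms(3,4)] assms(2-4)
  by simp

lemma design_fourth_moment:
  assumes "projective_design t d L u" "2 \<le> t" "j < d" "k < d" "p < d" "q < d"
  shows "(1 / real L) * (\<Sum>l<L. u l j * u l k * u l p * u l q) = 1 / (real d * (real d + 2))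
    * (of_bool (j = k \<and> p = q) + of_bool (j = p \<and> k = q) + of_bool (j = q \<and> k = p))"
  using design_average_monomial[OF assms(1), of "[j, k, p, q]" 2] sphere_moment_4[OF assms(3-6)] assms(2-6)
  by (simp add: mult.assoc)

section \<open>The estimator\<close>

lemma average_sq_deviation:
  fixes Y :: "nat \<Rightarrow> real"
  assumes "L > 0"
  shows "(1 / real L) * (\<Sum>l<L. (Y l - (1 / real L) * (\<Sum>l'<L. Y l'))\<^sup>2)
    = (1 / real L) * (\<Sum>l<L. (Y l)\<^sup>2) - ((1 / real L) * (\<Sum>l<L. Y l))\<^sup>2"
proof -
  define \<mu> where "\<mu> = (1 / real L) * (\<Sum>l<L. Y l)"
  have "(\<Sum>l<L. (Y l - \<mu>)\<^sup>2) = (\<Sum>l<L. (Y l)\<^sup>2) - 2 * \<mu> * (\<Sum>l<L. Y l) + real L * \<mu>\<^sup>2"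
    by (simp add: power2_diff sum.distrib sum_subtractf sum_distrib_left mult_ac)
  moreover have "(\<Sum>l<L. Y l) = real L * \<mu>"
    using assms by (simp add: \<mu>_def)
  ultimately show ?thesis
    using assms unfolding \<mu>_def[symmetric] by (simp add: field_simps power2_eq_square)
qed

lemma sum_sq_row_le_norm_2_inf:
  assumes "i < m"
  shows "(\<Sum>j<n. (A i j)\<^sup>2) \<le> (norm_2_inf m n A)\<^sup>2"
proof -
  have "sqrt (\<Sum>j<n. (A i j)\<^sup>2) \<le> norm_2_inf m n A"
    unfolding norm_2_inf_def using assms by (intro Max_ge) auto
  then have "(sqrt (\<Sum>j<n. (A i j)\<^sup>2))\<^sup>2 \<le> (norm_2_inf m n A)\<^sup>2"
    by (rule power_mono) (simp add: sum_nonneg)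
  then show ?thesis
    by (simp add: sum_nonneg)
qed

lemma estimator_variance_bound:
  fixes D A c :: real
  assumes "0 \<le> D" "c\<^sup>2 \<le> A"
  shows "D * (A + 2 * c\<^sup>2) / (D + 2) - c\<^sup>2 \<le> 2 * A"
proof -
  have "D * (A + 2 * c\<^sup>2) - (D + 2) * c\<^sup>2 = D * A + (D - 2) * c\<^sup>2"
    by (simp add: algebra_simps)
  also have "\<dots> \<le> D * A + (D + 4) * A"
  proof -
    have "(D - 2) * c\<^sup>2 \<le> (D + 4) * c\<^sup>2"
      by (rule mult_right_mono) simp_all
    also have "\<dots> \<le> (D + 4) * A"
      by (rule mult_left_mono) (use assms in simp_all)
    finally show ?thesis by simp
  qed
  finally show ?thesis
    using assms by (simp add: field_simps)
qed

lemma design_estimator_mean: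
  assumes "projective_design t d L u" "1 \<le> t" "n \<le> d" "d > 0"
  shows "(1 / real L) * (\<Sum>l<L. real d * ((\<Sum>j<n. a j * u l j) * (\<Sum>k<n. x k * u l k)))
    = (\<Sum>j<n. a j * x j)"
  using average_bilinear_isotropic[of n L u "1 / real d" a x] design_second_moment[OF assms(1,2)] assms(3,4)
  by (simp add: sum_distrib_left[symmetric] mult_ac)

lemma design_estimator_second_moment:
  assumes "projective_design t d L u" "2 \<le> t" "n \<le> d" "(\<Sum>j<n. x j * x j) = 1"
  shows "(1 / real L) * (\<Sum>l<L. (real d * ((\<Sum>j<n. a j * u l j) * (\<Sum>k<n. x k * u l k)))\<^sup>2)
    = real d * ((\<Sum>j<n. a j * a j) + 2 * (\<Sum>j<n. a j * x j)\<^sup>2) / (real d + 2)"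
  using average_quartic_isotropic[of n L u "1 / (real d * (real d + 2))" a a x x]
    design_fourth_moment[OF assms(1,2)] assms(3,4)
  by (simp add: power2_eq_square sum_distrib_left[symmetric] mult_ac)

lemma design_estimator_variance_le:
  fixes Y :: "nat \<Rightarrow> real"
  assumes "projective_design 2 d L u" "n \<le> d" "d > 0" "(\<Sum>j<n. x j * x j) = 1"
    and Y: "\<And>l. Y l = real d * ((\<Sum>j<n. a j * u l j) * (\<Sum>k<n. x k * u l k))"
  shows "(1 / real L) * (\<Sum>l<L. (Y l - (1 / real L) * (\<Sum>l'<L. Y l'))\<^sup>2) \<le> 2 * (\<Sum>j<n. a j * a j)"
proof -
  have "(\<Sum>j<n. a j * x j)\<^sup>2 \<le> (\<Sum>j<n. a j * a j)"
    using Cauchy_Schwarz_ineq_sum[of a x "{..<n}"] assms(4) by (simp add: power2_eq_square)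
  have "(1 / real L) * (\<Sum>l<L. (Y l - (1 / real L) * (\<Sum>l'<L. Y l'))\<^sup>2)
      = (1 / real L) * (\<Sum>l<L. (Y l)\<^sup>2) - ((1 / real L) * (\<Sum>l<L. Y l))\<^sup>2"
    by (rule average_sq_deviation[OF projective_design_nonempty[OF assms(1)]])
  also have "\<dots> = real d * ((\<Sum>j<n. a j * a j) + 2 * (\<Sum>j<n. a j * x j)\<^sup>2) / (real d + 2)
      - (\<Sum>j<n. a j * x j)\<^sup>2"
    unfolding Y using design_estimator_mean[OF assms(1) _ assms(2,3)]
      design_estimator_second_moment[OF assms(1) _ assms(2,4)] by simp
  also have "\<dots> \<le> 2 * (\<Sum>j<n. a j * a j)"
    by (rule estimator_variance_bound) (simp_all add: \<open>(\<Sum>j<n. a j * x j)\<^sup>2 \<le> (\<Sum>j<n. a j * a j)\<close>)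
  finally show ?thesis .
qed

theorem lemma2p3:
  fixes m n d L :: nat
    and A :: "nat \<Rightarrow> nat \<Rightarrow> real"
    and u :: "nat \<Rightarrow> nat \<Rightarrow> real"
    and x :: "nat \<Rightarrow> real"
    and i :: nat
  assumes "d \<ge> n"
    and "projective_design 2 d L u"
    and "sqnorm n x = 1"
    and "i < m"
  defines "Y \<equiv> (\<lambda>l. let z = (\<lambda>j. sqrt (real d) * u l j) in
              (\<Sum>j<n. A i j * z j * (\<Sum>k<n. z k * x k)))"
  shows "(1 / real L) * (\<Sum>l<L. Y l) = (\<Sum>j<n. A i j * x j)
     \<and> (1 / real L) * (\<Sum>l<L. (Y l - (1 / real L) * (\<Sum>l'<L. Y l'))^2)
         \<le> 2 * (norm_2_inf m n A)^2"
proof (cases "n = 0")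
  case True
  then show ?thesis by (simp add: Y_def)
next
  case False
  have sqrt_d: "sqrt (real d) * (sqrt (real d) * t) = real d * t" for t
    by (simp add: mult.assoc[symmetric])
  have Y: "Y l = real d * ((\<Sum>j<n. A i j * u l j) * (\<Sum>k<n. x k * u l k))" for l
    unfolding Y_def Let_def by (simp add: sum_distrib_left sum_distrib_right mult_ac sqrt_d)
  have x: "(\<Sum>j<n. x j * x j) = 1"
    using assms(3) by (simp add: sqnorm_def power2_eq_square)
  have "d > 0" using False assms(1) by simp
  have "(1 / real L) * (\<Sum>l<L. (Y l - (1 / real L) * (\<Sum>l'<L. Y l'))\<^sup>2) \<le> 2 * (\<Sum>j<n. A i j * A i j)"
    by (rule design_estimator_variance_le[OF assms(2,1) \<open>d > 0\<close> x Y])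
  also have "\<dots> \<le> 2 * (norm_2_inf m n A)\<^sup>2"
    using sum_sq_row_le_norm_2_inf[OF assms(4), where n=n and A=A] by (simp add: power2_eq_square)
  finally show ?thesis
    using design_estimator_mean[OF assms(2) _ assms(1) \<open>d > 0\<close>] by (simp add: Y)
qed

end
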